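(* Suppose $(x,y)$ is defined over a $\sigma$-finite space $\mathcal{X}\times\mathcal{Y}$ and $x$ is a real sub-Gaussian random variable with mean $0$ upper-exponentially bounded by $K$. Let $m(y)=\mathbb{E}[x\mid y]$ and $\epsilon(y)=x-m(y)$. Then: (i) $m(y)$ and $\epsilon(y)$ are sub-Gaussian and upper-exponentially bounded by $K$ and $2K$ respectively. (ii) Let $\mathcal{Z}=\{y:\exists t\in(0,t_0]\text{ such that }\int_{\mathcal{X}}\exp(tx^2)p(x\mid y)p(y)\,dx=\infty\}$; then $\mathbb{P}(y\in\mathcal{Z})=0$. (iii) For any fixed constants $0<C_1<1<C_2$ and any partition $\mathbb{R}=\bigcup_{h=1}^HS_h$ into intervals with $\frac{C_1}{H}\le\mathbb{P}(y\in S_h)\le\frac{C_2}{H}$ for all $h$, there is a constant $C$ with \[\sup_h\mathbb{P}(x|_{y\in S_h}>t)\le CH\exp\Big(1-\frac{t^2}{K^2}\Big);\] moreover there is a positive constant $C$ such that $\mathbb{E}\big[\exp\big((x|_{y\in S_h})^2/(2K^2)\big)\big]\le CH$ and $\mathbb{E}\big[|x|_{y\in S_h}|^m\big]\le CHmK^m\Gamma(m/2)/2$. (iv) With $S_h$ as in (iii), let $x_1,\dots,x_c$ be $c$ i.i.d. samples from $x|_{y\in S_h}$, $\bar x_h=\frac1c\sum_ix_i$ and $\mu_h=\mathbb{E}[x|_{y\in S_h}]$. Then \[\mathbb{P}(|\bar x_h-\mu_h|>t)\le2\exp\Big(\frac{-ct^2}{2CHK^2+2tK}\Big).\]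
   Context: $x|_{y\in S}$ denotes a random variable with the conditional distribution of $x$ given $y\in S$; $p(x\mid y)$, $p(y)$ are conditional and marginal densities. $t_0>0$ is a constant with $\mathbb{E}\exp(tx^2)\le e$ for $0\le t\le t_0$ (it exists by sub-Gaussianity). Upper-exponential bound: $z$ is upper-exponentially bounded by $K$ if $K>\max\{K_1,K_2,K_3,K_4\}$ where $P(|z|>t)\le\exp(1-t^2/K_1^2)$ for all $t\ge0$, $(\mathbb{E}|z|^q)^{1/q}\le K_2\sqrt q$ for all $q\ge1$, $\mathbb{E}\exp(z^2/K_3^2)\le e$, and (if $\mathbb{E}z=0$) $\mathbb{E}\exp(tz)\le\exp(t^2K_4^2)$ for all $t$. *)

theory Defs
  imports "HOL-Probability.Probability"
begin

definition subgaussian :: "'a measure \<Rightarrow> ('a \<Rightarrow> real) \<Rightarrow> bool" where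
  "subgaussian M z \<longleftrightarrow> z \<in> borel_measurable M \<and>
     (\<exists>L>0. \<forall>t\<ge>0. measure M {\<omega>\<in>space M. \<bar>z \<omega>\<bar> > t} \<le> 2 * exp (- (t\<^sup>2 / L\<^sup>2)))"

text \<open>Upper-exponential boundedness by K, as in the paper. Moment condition
  (E|z|^q)^(1/q) <= K2 sqrt q is written equivalently as E|z|^q <= (K2 sqrt q)^q
  with nonnegative integrals.\<close>
definition upexp_bounded :: "'a measure \<Rightarrow> ('a \<Rightarrow> real) \<Rightarrow> real \<Rightarrow> bool" where
  "upexp_bounded M z K \<longleftrightarrow>
    (\<exists>K1 K2 K3 K4. 0 < K1 \<and> 0 < K2 \<and> 0 < K3 \<and> 0 < K4 \<and>
       K > Max {K1, K2, K3, K4} \<and>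
       (\<forall>t\<ge>0. measure M {\<omega>\<in>space M. \<bar>z \<omega>\<bar> > t} \<le> exp (1 - t\<^sup>2 / K1\<^sup>2)) \<and>
       (\<forall>q::real. q \<ge> 1 \<longrightarrow>
          (\<integral>\<^sup>+\<omega>. ennreal (\<bar>z \<omega>\<bar> powr q) \<partial>M) \<le> ennreal ((K2 * sqrt q) powr q)) \<and>
       (\<integral>\<^sup>+\<omega>. ennreal (exp ((z \<omega>)\<^sup>2 / K3\<^sup>2)) \<partial>M) \<le> ennreal (exp 1) \<and>
       ((integrable M z \<and> (\<integral>\<omega>. z \<omega> \<partial>M) = 0) \<longrightarrow>
          (\<forall>t::real. (\<integral>\<^sup>+\<omega>. ennreal (exp (t * z \<omega>)) \<partial>M) \<le> ennreal (exp (t\<^sup>2 * K4\<^sup>2)))))"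

definition interval_partition :: "nat \<Rightarrow> (nat \<Rightarrow> real set) \<Rightarrow> bool" where
  "interval_partition H S \<longleftrightarrow> H \<ge> 1 \<and> (\<forall>h\<in>{1..H}. is_interval (S h)) \<and>
     disjoint_family_on S {1..H} \<and> (\<Union>h\<in>{1..H}. S h) = UNIV"

text \<open>The probability space conditioned on the event Y in S; the random variable
  x restricted to y in S is X viewed on this measure.\<close>
definition cond_on :: "'a measure \<Rightarrow> ('a \<Rightarrow> real) \<Rightarrow> real set \<Rightarrow> 'a measure" where
  "cond_on M Y S = uniform_measure M {\<omega>\<in>space M. Y \<omega> \<in> S}"

end

theory Submission
  imports Defs
begin

text \<open>
  (i) Conditional Jensen transfers each convex moment condition of \<open>x\<close> (absolute moments,
  exp-square moment, moment generating function) to \<open>m = E[x | y]\<close>. By midpoint convexity the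
  integrands at \<open>x - m\<close> are bounded by averages of the integrands at \<open>x\<close> and at \<open>m\<close> with
  doubled scale, so \<open>\<epsilon> = x - m\<close> satisfies them with doubled constants. Tail bounds follow from
  the exp-square moment by Markov's inequality.

  (ii) By Tonelli, integrating the sections \<open>\<integral> exp(t\<^sub>0 x\<^sup>2) p(x, y) dx\<close> over \<open>y\<close> gives
  \<open>E exp(t\<^sub>0 x\<^sup>2) < \<infinity>\<close>, so they are finite for almost every \<open>y\<close>, and for \<open>t \<le> t\<^sub>0\<close> they are smaller.

  (iii) Conditioning on an event of probability at least \<open>C\<^sub>1/H\<close> inflates probabilities and
  nonnegative integrals by at most \<open>H/C\<^sub>1\<close>; the moment bound comes from the pointwise estimate
  \<open>|x|\<^sup>m \<le> K\<^sup>m m \<Gamma>(m/2)/2 \<cdot> exp(x\<^sup>2/K\<^sup>2)\<close>.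

  (iv) The second-order bound \<open>exp u \<le> 1 + u + u\<^sup>2 exp |u| / 2\<close> and Jensen give, on a cell,
  \<open>E exp(l (x - \<mu>)) \<le> exp(l\<^sup>2 s)\<close> with \<open>s = O(H K\<^sup>2)\<close> whenever \<open>|l| \<le> 1/K\<close>; Chernoff's bound for the
  sum of the independent copies then yields Bernstein's inequality.
\<close>

section \<open>Elementary inequalities\<close>

lemma exp_le_second_order: "exp (u::real) \<le> 1 + u + u\<^sup>2 / 2 * exp \<bar>u\<bar>"
proof -
  obtain t where t: "\<bar>t\<bar> \<le> \<bar>u\<bar>" "exp u = (\<Sum>m<2. u ^ m / fact m) + exp t / fact 2 * u ^ 2"
    using Maclaurin_exp_le[of u 2] by blast
  have "exp t / fact 2 * u ^ 2 \<le> exp \<bar>u\<bar> / 2 * u\<^sup>2"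
    using t(1) by (intro mult_right_mono) (auto simp: fact_numeral)
  thus ?thesis using t(2) by (simp add: eval_nat_numeral field_simps)
qed

lemma powr_le_exp_scaled:
  fixes v a :: real assumes "v \<ge> 0" "a > 0"
  shows "v powr a \<le> (a / exp 1) powr a * exp v"
proof (cases "v = 0")
  case False
  hence v: "v > 0" using assms by simp
  have "ln (v / a) \<le> v / a - 1" using v assms by (intro ln_le_minus_one) simp
  hence "a * ln v \<le> a * ln a - a + v" using v assms by (simp add: ln_div field_simps)
  hence "exp (a * ln v) \<le> exp (a * ln a - a + v)" by simp
  moreover have "(a / exp 1) powr a * exp v = exp (a * ln a - a + v)"
    using assms by (simp add: powr_def ln_div exp_add[symmetric] algebra_simps)
  ultimately show ?thesis using v by (simp add: powr_def)
qed (use assms in simp)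

lemma one_plus_inverse_powr_le_exp: "z > (0::real) \<Longrightarrow> (1 + 1/z) powr z \<le> exp 1"
proof -
  assume z: "z > 0"
  have "ln (1 + 1/z) \<le> 1/z" using z by (intro ln_add_one_self_le_self) simp
  hence "z * ln (1 + 1/z) \<le> 1" using z by (simp add: field_simps)
  moreover have "1 + 1/z > 0" using z by (simp add: add_pos_pos)
  ultimately show ?thesis by (simp add: powr_def)
qed

text \<open>A crude Stirling bound \<open>(z/e)\<^sup>z \<le> \<Gamma>(z + 1)\<close>, which propagates from \<open>z\<close> to \<open>z + 1\<close>
  and therefore along the half-integers from its cases \<open>z = 1/2\<close> and \<open>z = 1\<close>.\<close>

lemma powr_le_Gamma_step:
  assumes z: "z > (0::real)" and IH: "(z / exp 1) powr z \<le> z * Gamma z"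
  shows "((z + 1) / exp 1) powr (z + 1) \<le> (z + 1) * Gamma (z + 1)"
proof -
  have G: "Gamma (z + 1) = z * Gamma z"
    using Gamma_plus1[of z] z by (auto simp: nonpos_Ints_def)
  have pos: "1 + 1/z > 0" using z by (simp add: add_pos_pos)
  have split: "(z + 1) / exp 1 = (z / exp 1) * (1 + 1/z)" using z by (simp add: field_simps)
  have "((z + 1) / exp 1) powr z = (z / exp 1) powr z * (1 + 1/z) powr z"
    unfolding split using z pos powr_mult[of "z / exp 1" "1 + 1/z" z] by simp
  hence "((z + 1) / exp 1) powr (z + 1) = ((z + 1) / exp 1) * ((z / exp 1) powr z * (1 + 1/z) powr z)"
    using z by (simp add: powr_add)
  also have "\<dots> \<le> ((z + 1) / exp 1) * ((z * Gamma z) * exp 1)"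
    using z IH one_plus_inverse_powr_le_exp[OF z] by (intro mult_left_mono mult_mono) auto
  also have "\<dots> = (z + 1) * Gamma (z + 1)" using G by simp
  finally show ?thesis .
qed

lemma half_nat_powr_le_Gamma:
  fixes m :: nat assumes "m \<ge> 1"
  shows "(real m / 2 / exp 1) powr (real m / 2) \<le> real m / 2 * Gamma (real m / 2)"
  using assms
proof (induction m rule: less_induct)
  case (less m)
  consider "m = 1" | "m = 2" | "m > 2" using less.prems by linarith
  then show ?case
  proof cases
    case 1
    have "1 / 2 / exp 1 \<le> (1/4::real)" using exp_ge_add_one_self[of 1] by (simp add: field_simps)
    also have "\<dots> \<le> pi / 4" using pi_ge_two by simp
    finally have "(1/2/exp 1) powr (1/2) \<le> (pi/4) powr (1/2)" by (intro powr_mono2) auto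
    also have "(pi/4) powr (1/2) = sqrt pi / 2" by (simp add: powr_half_sqrt real_sqrt_divide)
    finally show ?thesis using 1 by (simp add: Gamma_one_half_real)
  next
    case 2
    thus ?thesis by (simp add: exp_minus field_simps)
  next
    case 3
    define k where "k = m - 2"
    have k: "k \<ge> 1" "k < m" "real m / 2 = real k / 2 + 1"
      using 3 by (auto simp: k_def of_nat_diff field_simps)
    from powr_le_Gamma_step[OF _ less.IH[OF k(2,1)]] k(1)
    have "((real k / 2 + 1) / exp 1) powr (real k / 2 + 1) \<le> (real k / 2 + 1) * Gamma (real k / 2 + 1)"
      by simp
    thus ?thesis unfolding k(3) .
  qed
qed

lemma abs_power_le_Gamma_exp_square:
  fixes x k :: real and m :: nat assumes k: "k > 0" and m: "m \<ge> 1"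
  shows "\<bar>x\<bar> ^ m \<le> k ^ m * (real m * Gamma (real m / 2) / 2) * exp (x\<^sup>2 / k\<^sup>2)"
proof -
  define v where "v = x\<^sup>2 / k\<^sup>2"
  have "v powr (real m / 2) = ((\<bar>x\<bar> / k) ^ 2) powr (real m / 2)"
    by (simp add: v_def power_divide)
  also have "\<dots> = (\<bar>x\<bar> / k) powr (2 * (real m / 2))"
    using k by (subst powr_powr[symmetric]) (simp add: powr_realpow')
  also have "\<dots> = (\<bar>x\<bar> / k) ^ m"
    using k m by (cases "x = 0") (auto simp: powr_realpow)
  finally have "(\<bar>x\<bar> / k) ^ m = v powr (real m / 2)" ..
  also have "\<dots> \<le> (real m / 2 / exp 1) powr (real m / 2) * exp v"
    using m by (intro powr_le_exp_scaled) (auto simp: v_def)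
  also have "\<dots> \<le> (real m * Gamma (real m / 2) / 2) * exp v"
    using half_nat_powr_le_Gamma[OF m] by (intro mult_right_mono) auto
  finally have "(\<bar>x\<bar> / k) ^ m \<le> (real m * Gamma (real m / 2) / 2) * exp v" .
  hence "k ^ m * (\<bar>x\<bar> / k) ^ m \<le> k ^ m * ((real m * Gamma (real m / 2) / 2) * exp v)"
    using k by (intro mult_left_mono) auto
  thus ?thesis using k by (simp add: v_def power_divide mult.assoc)
qed

lemma convex_on_abs_compose:
  fixes h :: "real \<Rightarrow> real"
  assumes cv: "convex_on {0..} h" and mo: "\<And>x y. 0 \<le> x \<Longrightarrow> x \<le> y \<Longrightarrow> h x \<le> h y"
  shows "convex_on UNIV (\<lambda>x. h \<bar>x\<bar>)"
proof (rule convex_onI)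
  fix t x y :: real assume t: "0 < t" "t < 1"
  have "\<bar>(1 - t) *\<^sub>R x + t *\<^sub>R y\<bar> \<le> (1 - t) * \<bar>x\<bar> + t * \<bar>y\<bar>"
    using t by (simp add: abs_triangle_ineq[THEN order_trans] abs_mult)
  hence "h \<bar>(1 - t) *\<^sub>R x + t *\<^sub>R y\<bar> \<le> h ((1 - t) * \<bar>x\<bar> + t * \<bar>y\<bar>)"
    by (intro mo) auto
  also have "\<dots> \<le> (1 - t) * h \<bar>x\<bar> + t * h \<bar>y\<bar>"
    using convex_onD[OF cv, of t "\<bar>x\<bar>" "\<bar>y\<bar>"] t by simp
  finally show "h \<bar>(1 - t) *\<^sub>R x + t *\<^sub>R y\<bar> \<le> (1 - t) * h \<bar>x\<bar> + t * h \<bar>y\<bar>" .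
qed simp

lemma convex_on_powr_nonneg:
  fixes q :: real assumes q: "q \<ge> 1"
  shows "convex_on {0..} (\<lambda>x. x powr q)"
proof (rule convex_onI)
  fix t x y :: real assume t: "0 < t" "t < 1" and xy: "x \<in> {0..}" "y \<in> {0..}"
  have scale: "(s * z) powr q \<le> s * z powr q" if "0 \<le> s" "s \<le> 1" "0 \<le> z" for s z :: real
  proof -
    have "s powr q \<le> s" using that q by (cases "s = 0") (auto intro: powr_le_one_le)
    thus ?thesis using that by (simp add: powr_mult mult_right_mono)
  qed
  show "((1 - t) *\<^sub>R x + t *\<^sub>R y) powr q \<le> (1 - t) * x powr q + t * y powr q"
  proof (cases "x = 0 \<or> y = 0")
    case False
    with xy have "x \<in> {0<..}" "y \<in> {0<..}" by auto
    with convex_onD[OF powr_convex[OF q], of t x y] t show ?thesis by auto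
  next
    case True
    thus ?thesis using scale[of t y] scale[of "1 - t" x] t xy by auto
  qed
qed (auto simp: convex_real_interval)

lemma convex_on_abs_powr: "q \<ge> 1 \<Longrightarrow> convex_on UNIV (\<lambda>x::real. \<bar>x\<bar> powr q)"
  by (rule convex_on_abs_compose[OF convex_on_powr_nonneg]) (auto intro: powr_mono2)

lemma convex_on_exp_cmult: "convex_on UNIV (\<lambda>x::real. exp (t * x))"
  by (intro convex_on_realI[where f' = "\<lambda>x. t * exp (t * x)"])
     (auto intro!: derivative_eq_intros simp: mono_on_def mult_le_cancel_left)

lemma convex_on_exp_cmult_square:
  assumes "c \<ge> (0::real)" shows "convex_on UNIV (\<lambda>x. exp (c * x\<^sup>2))"
proof (rule f''_ge0_imp_convex)
  show "DERIV (\<lambda>x. exp (c * x\<^sup>2)) x :> 2 * c * x * exp (c * x\<^sup>2)" for x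
    by (rule derivative_eq_intros refl | simp)+
  show "DERIV (\<lambda>x. 2 * c * x * exp (c * x\<^sup>2)) x :> (2 * c + 4 * c\<^sup>2 * x\<^sup>2) * exp (c * x\<^sup>2)" for x
    by (rule derivative_eq_intros refl | simp add: power2_eq_square algebra_simps)+
  show "0 \<le> (2 * c + 4 * c\<^sup>2 * x\<^sup>2) * exp (c * x\<^sup>2)" for x using assms by simp
qed auto

lemma convex_on_square_exp_abs:
  assumes "l \<ge> (0::real)" shows "convex_on UNIV (\<lambda>x. x\<^sup>2 * exp (2 * l * \<bar>x\<bar>))"
proof -
  have "convex_on {0..} (\<lambda>x. x\<^sup>2 * exp (2 * l * x))"
  proof (rule f''_ge0_imp_convex)
    show "DERIV (\<lambda>x. x\<^sup>2 * exp (2 * l * x)) x :> (2 * x + 2 * l * x\<^sup>2) * exp (2 * l * x)" for x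
      by (rule derivative_eq_intros refl | simp add: power2_eq_square algebra_simps)+
    show "DERIV (\<lambda>x. (2 * x + 2 * l * x\<^sup>2) * exp (2 * l * x)) x :>
            (2 + 8 * l * x + 4 * l\<^sup>2 * x\<^sup>2) * exp (2 * l * x)" for x
      by (rule derivative_eq_intros refl | simp add: power2_eq_square algebra_simps)+
    show "0 \<le> (2 + 8 * l * x + 4 * l\<^sup>2 * x\<^sup>2) * exp (2 * l * x)" if "x \<in> {0..}" for x
      using that assms by (intro mult_nonneg_nonneg) auto
  qed (auto simp: convex_real_interval)
  hence "convex_on UNIV (\<lambda>x. \<bar>x\<bar>\<^sup>2 * exp (2 * l * \<bar>x\<bar>))"
    by (rule convex_on_abs_compose) (use assms in \<open>auto intro!: mult_mono power_mono\<close>)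
  thus ?thesis by simp
qed

lemma exp_square_diff_le:
  assumes k: "k > (0::real)"
  shows "exp ((a - b)\<^sup>2 / (2 * k)\<^sup>2) \<le> exp (a\<^sup>2 / k\<^sup>2) / 2 + exp (b\<^sup>2 / k\<^sup>2) / 2"
proof -
  have "(a - b)\<^sup>2 \<le> 2 * a\<^sup>2 + 2 * b\<^sup>2"
    using zero_le_square[of "a + b"] by (simp add: power2_eq_square algebra_simps)
  hence "(a - b)\<^sup>2 / 4 / k\<^sup>2 \<le> (a\<^sup>2 + b\<^sup>2) / 2 / k\<^sup>2"
    by (intro divide_right_mono) auto
  hence "(a - b)\<^sup>2 / (2 * k)\<^sup>2 \<le> (1 - 1/2) * (a\<^sup>2 / k\<^sup>2) + 1/2 * (b\<^sup>2 / k\<^sup>2)"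
    by (simp add: power_mult_distrib add_divide_distrib)
  hence "exp ((a - b)\<^sup>2 / (2 * k)\<^sup>2) \<le> exp ((1 - 1/2) * (a\<^sup>2 / k\<^sup>2) + 1/2 * (b\<^sup>2 / k\<^sup>2))"
    by simp
  also have "\<dots> \<le> (1 - 1/2) * exp (a\<^sup>2 / k\<^sup>2) + 1/2 * exp (b\<^sup>2 / k\<^sup>2)"
    using convex_onD[OF exp_convex, of "1/2" "a\<^sup>2 / k\<^sup>2" "b\<^sup>2 / k\<^sup>2"] by simp
  finally show ?thesis by simp
qed

lemma exp_cmult_diff_le: "exp ((t::real) * (a - b)) \<le> exp (2 * t * a) / 2 + exp (- (2 * t) * b) / 2"
proof -
  have "exp ((1 - 1/2) *\<^sub>R (2 * t * a) + (1/2) *\<^sub>R (- (2 * t) * b))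
          \<le> (1 - 1/2) * exp (2 * t * a) + 1/2 * exp (- (2 * t) * b)"
    by (rule convex_onD[OF exp_convex]) auto
  thus ?thesis by (simp add: algebra_simps)
qed

lemma abs_diff_powr_le:
  fixes a b q :: real assumes q: "q \<ge> 1"
  shows "\<bar>a - b\<bar> powr q \<le> 2 powr q * (\<bar>a\<bar> powr q / 2 + \<bar>b\<bar> powr q / 2)"
proof -
  define c where "c = (1 - 1/2) * \<bar>a\<bar> + 1/2 * \<bar>b\<bar>"
  have c: "c \<ge> 0" by (simp add: c_def)
  have "\<bar>a - b\<bar> powr q \<le> (2 * c) powr q" unfolding c_def by (intro powr_mono2) (use q in auto)
  also have "\<dots> = 2 powr q * c powr q" using c by (simp add: powr_mult)
  also have "c powr q \<le> (1 - 1/2) * \<bar>a\<bar> powr q + 1/2 * \<bar>b\<bar> powr q"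
    using convex_onD[OF convex_on_powr_nonneg[OF q], of "1/2" "\<bar>a\<bar>" "\<bar>b\<bar>"] by (simp add: c_def)
  finally show ?thesis by (simp add: mult_left_mono)
qed

lemma square_exp_abs_le_exp_square:
  fixes x l k :: real assumes k: "k > 0" and l: "\<bar>l\<bar> \<le> 1 / k"
  shows "x\<^sup>2 * exp (2 * \<bar>l\<bar> * \<bar>x\<bar>) \<le> 2 * exp 2 * k\<^sup>2 * exp (x\<^sup>2 / k\<^sup>2)"
proof -
  define y where "y = \<bar>x\<bar> / k"
  have x2: "x\<^sup>2 = k\<^sup>2 * y\<^sup>2" using k by (simp add: y_def power_divide)
  have "\<bar>l\<bar> * \<bar>x\<bar> \<le> (1/k) * \<bar>x\<bar>" using l by (intro mult_right_mono) auto
  hence lx: "2 * \<bar>l\<bar> * \<bar>x\<bar> \<le> 2 * y" by (simp add: y_def)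
  have y2: "y\<^sup>2 \<le> 2 * exp (y\<^sup>2/2)" using exp_ge_add_one_self[of "y\<^sup>2/2"] by linarith
  have q: "2 * y + y\<^sup>2/2 \<le> 2 + y\<^sup>2"
    using zero_le_square[of "y - 2"] by (simp add: power2_eq_square algebra_simps)
  have "x\<^sup>2 * exp (2 * \<bar>l\<bar> * \<bar>x\<bar>) \<le> k\<^sup>2 * y\<^sup>2 * exp (2 * y)"
    unfolding x2 using lx by (intro mult_left_mono) auto
  also have "\<dots> \<le> k\<^sup>2 * (2 * exp (y\<^sup>2/2)) * exp (2 * y)"
    using y2 by (intro mult_right_mono mult_left_mono) auto
  also have "\<dots> = 2 * k\<^sup>2 * exp (2 * y + y\<^sup>2/2)" by (simp add: exp_add)
  also have "\<dots> \<le> 2 * k\<^sup>2 * exp (2 + y\<^sup>2)" using q by (intro mult_left_mono) auto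
  also have "\<dots> = 2 * exp 2 * k\<^sup>2 * exp (x\<^sup>2 / k\<^sup>2)" using k by (simp add: exp_add x2)
  finally show ?thesis .
qed

lemma square_exp_abs_diff_le:
  fixes x \<mu> l :: real
  shows "(x - \<mu>)\<^sup>2 * exp (\<bar>l\<bar> * \<bar>x - \<mu>\<bar>) \<le>
           4 * (x\<^sup>2 * exp (2 * \<bar>l\<bar> * \<bar>x\<bar>) + \<mu>\<^sup>2 * exp (2 * \<bar>l\<bar> * \<bar>\<mu>\<bar>))"
proof -
  define w where "w = max \<bar>x\<bar> \<bar>\<mu>\<bar>"
  have d: "\<bar>x - \<mu>\<bar> \<le> 2 * w" unfolding w_def by linarith
  have "(x - \<mu>)\<^sup>2 = \<bar>x - \<mu>\<bar>\<^sup>2" by simp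
  also have "\<dots> \<le> (2 * w)\<^sup>2" using d by (intro power_mono) auto
  finally have s: "(x - \<mu>)\<^sup>2 \<le> 4 * w\<^sup>2" by (simp add: power_mult_distrib)
  have e: "exp (\<bar>l\<bar> * \<bar>x - \<mu>\<bar>) \<le> exp (2 * \<bar>l\<bar> * w)"
    using mult_left_mono[OF d, of "\<bar>l\<bar>"] by (simp add: mult_ac)
  have "(x - \<mu>)\<^sup>2 * exp (\<bar>l\<bar> * \<bar>x - \<mu>\<bar>) \<le> 4 * (w\<^sup>2 * exp (2 * \<bar>l\<bar> * w))"
    using mult_mono[OF s e] by simp
  also have "w\<^sup>2 * exp (2 * \<bar>l\<bar> * w) \<le> x\<^sup>2 * exp (2 * \<bar>l\<bar> * \<bar>x\<bar>) + \<mu>\<^sup>2 * exp (2 * \<bar>l\<bar> * \<bar>\<mu>\<bar>)"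
    by (cases "\<bar>x\<bar> \<le> \<bar>\<mu>\<bar>") (simp_all add: w_def max_def)
  finally show ?thesis by simp
qed

lemma chernoff_exponent_le:
  fixes c t K D s :: real
  assumes c: "c \<ge> 0" and t: "t > 0" and K: "K > 0" and D: "D > 0" and s: "s \<le> D / 2"
  shows "c * (t / (D + t * K))\<^sup>2 * s - (t / (D + t * K)) * (c * t) \<le> - (c * t\<^sup>2) / (2 * D + 2 * t * K)"
proof -
  define S where "S = D + t * K"
  have S: "S > 0" using t K D by (simp add: S_def add_pos_pos)
  have "c * (t / S)\<^sup>2 * s \<le> c * (t / S)\<^sup>2 * (D / 2)" using c s by (intro mult_left_mono) auto
  moreover have "c * (t / S)\<^sup>2 * (D / 2) - (t / S) * (c * t) + (c * t\<^sup>2) / (2 * S) = - (c * t^3 * K) / (2 * S\<^sup>2)"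
  proof -
    have DS: "D = S - t * K" by (simp add: S_def)
    show ?thesis unfolding DS using S by (simp add: field_simps power2_eq_square power3_eq_cube)
  qed
  moreover have "- (c * t^3 * K) / (2 * S\<^sup>2) \<le> 0" using c t K S by (simp add: divide_nonpos_pos)
  moreover have "2 * D + 2 * t * K = 2 * S" by (simp add: S_def)
  ultimately show ?thesis unfolding S_def[symmetric] by (smt (verit) minus_divide_left)
qed
lemma exp_le_second_order_centered:
  fixes l x \<mu> :: real
  defines "G \<equiv> \<lambda>x. x\<^sup>2 * exp (2 * \<bar>l\<bar> * \<bar>x\<bar>)"
  shows "exp (l * (x - \<mu>)) \<le> 1 + l * (x - \<mu>) + 2 * l\<^sup>2 * (G x + G \<mu>)"
proof -
  define u where "u = l * (x - \<mu>)"
  have "exp u \<le> 1 + u + u\<^sup>2 / 2 * exp \<bar>u\<bar>" by (rule exp_le_second_order)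
  also have "u\<^sup>2 / 2 * exp \<bar>u\<bar> = l\<^sup>2 / 2 * ((x - \<mu>)\<^sup>2 * exp (\<bar>l\<bar> * \<bar>x - \<mu>\<bar>))"
    by (simp add: u_def power_mult_distrib abs_mult)
  also have "\<dots> \<le> l\<^sup>2 / 2 * (4 * (G x + G \<mu>))"
    unfolding G_def by (intro mult_left_mono square_exp_abs_diff_le) auto
  finally show ?thesis by (simp add: u_def algebra_simps)
qed

section \<open>Sub-Gaussian moment conditions\<close>

text \<open>The conditions on \<open>K2\<close>, \<open>K3\<close>, \<open>K4\<close> in \<open>upexp_bounded\<close>, as they stand for a centred variable.\<close>

definition subgaussian_moments :: "'a measure \<Rightarrow> ('a \<Rightarrow> real) \<Rightarrow> real \<Rightarrow> real \<Rightarrow> real \<Rightarrow> bool" where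
  "subgaussian_moments M z K2 K3 K4 \<longleftrightarrow> 0 < K2 \<and> 0 < K3 \<and> 0 < K4 \<and>
     (\<forall>q\<ge>1. (\<integral>\<^sup>+\<omega>. ennreal (\<bar>z \<omega>\<bar> powr q) \<partial>M) \<le> ennreal ((K2 * sqrt q) powr q)) \<and>
     (\<integral>\<^sup>+\<omega>. ennreal (exp ((z \<omega>)\<^sup>2 / K3\<^sup>2)) \<partial>M) \<le> ennreal (exp 1) \<and>
     (\<forall>t. (\<integral>\<^sup>+\<omega>. ennreal (exp (t * z \<omega>)) \<partial>M) \<le> ennreal (exp (t\<^sup>2 * K4\<^sup>2)))"

lemma upexp_bounded_subgaussian_moments:
  assumes "upexp_bounded M X K" "integrable M X" "(\<integral>\<omega>. X \<omega> \<partial>M) = 0"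
  obtains K2 K3 K4 where "subgaussian_moments M X K2 K3 K4" "K2 < K" "K3 < K" "K4 < K"
  using assms unfolding upexp_bounded_def subgaussian_moments_def by auto

lemma exp_square_moment_mono:
  assumes "0 < k" "k \<le> K" "(\<integral>\<^sup>+\<omega>. ennreal (exp ((z \<omega>)\<^sup>2 / k\<^sup>2)) \<partial>M) \<le> ennreal (exp 1)"
  shows "(\<integral>\<^sup>+\<omega>. ennreal (exp ((z \<omega>)\<^sup>2 / K\<^sup>2)) \<partial>M) \<le> ennreal (exp 1)"
proof -
  have "(z \<omega>)\<^sup>2 / K\<^sup>2 \<le> (z \<omega>)\<^sup>2 / k\<^sup>2" for \<omega>
    using assms by (intro divide_left_mono power_mono) auto
  hence "(\<integral>\<^sup>+\<omega>. ennreal (exp ((z \<omega>)\<^sup>2 / K\<^sup>2)) \<partial>M) \<le> (\<integral>\<^sup>+\<omega>. ennreal (exp ((z \<omega>)\<^sup>2 / k\<^sup>2)) \<partial>M)"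
    by (intro nn_integral_mono ennreal_leI) simp
  thus ?thesis using assms(3) by (rule order.trans)
qed

lemma upexp_bounded_exp_square_moment:
  assumes "upexp_bounded M X K"
  shows "K > 0" "(\<integral>\<^sup>+\<omega>. ennreal (exp ((X \<omega>)\<^sup>2 / K\<^sup>2)) \<partial>M) \<le> ennreal (exp 1)"
proof -
  obtain K3 where K3: "0 < K3" "K3 < K"
    and E: "(\<integral>\<^sup>+\<omega>. ennreal (exp ((X \<omega>)\<^sup>2 / K3\<^sup>2)) \<partial>M) \<le> ennreal (exp 1)"
    using assms unfolding upexp_bounded_def by auto
  show "K > 0" using K3 by simp
  show "(\<integral>\<^sup>+\<omega>. ennreal (exp ((X \<omega>)\<^sup>2 / K\<^sup>2)) \<partial>M) \<le> ennreal (exp 1)"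
    using exp_square_moment_mono[OF K3(1) _ E] K3 by simp
qed

lemma integrable_if_nn_integral_le:
  fixes f :: "'a \<Rightarrow> real"
  assumes "f \<in> borel_measurable M" "\<And>\<omega>. f \<omega> \<ge> 0" "(\<integral>\<^sup>+\<omega>. ennreal (f \<omega>) \<partial>M) \<le> ennreal A"
  shows "integrable M f"
proof (rule integrableI_nonneg)
  show "(\<integral>\<^sup>+\<omega>. ennreal (f \<omega>) \<partial>M) < \<infinity>"
    using assms(3) by (rule le_less_trans) simp
qed (use assms in auto)

lemma nn_integral_le_if_le_average:
  fixes f g h :: "'a \<Rightarrow> real"
  assumes [measurable]: "f \<in> borel_measurable M" "g \<in> borel_measurable M"
    and f0: "\<And>\<omega>. f \<omega> \<ge> 0" and g0: "\<And>\<omega>. g \<omega> \<ge> 0" and c: "c \<ge> 0"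
    and h: "\<And>\<omega>. h \<omega> \<le> c * (f \<omega> / 2 + g \<omega> / 2)"
    and F: "(\<integral>\<^sup>+\<omega>. ennreal (f \<omega>) \<partial>M) \<le> ennreal A"
    and G: "(\<integral>\<^sup>+\<omega>. ennreal (g \<omega>) \<partial>M) \<le> ennreal A"
  shows "(\<integral>\<^sup>+\<omega>. ennreal (h \<omega>) \<partial>M) \<le> ennreal (c * A)"
proof -
  have "ennreal (h \<omega>) \<le> ennreal (c/2) * ennreal (f \<omega>) + ennreal (c/2) * ennreal (g \<omega>)" for \<omega>
    using h[of \<omega>] f0[of \<omega>] g0[of \<omega>] c
    by (simp add: ennreal_plus[symmetric] ennreal_mult[symmetric] algebra_simps ennreal_leI del: ennreal_plus)
  hence "(\<integral>\<^sup>+\<omega>. ennreal (h \<omega>) \<partial>M)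
      \<le> (\<integral>\<^sup>+\<omega>. ennreal (c/2) * ennreal (f \<omega>) + ennreal (c/2) * ennreal (g \<omega>) \<partial>M)"
    by (rule nn_integral_mono)
  also have "\<dots> = ennreal (c/2) * (\<integral>\<^sup>+\<omega>. ennreal (f \<omega>) \<partial>M) + ennreal (c/2) * (\<integral>\<^sup>+\<omega>. ennreal (g \<omega>) \<partial>M)"
    by (simp add: nn_integral_add nn_integral_cmult)
  also have "\<dots> \<le> ennreal (c/2) * ennreal A + ennreal (c/2) * ennreal A"
    using F G by (intro add_mono mult_left_mono) auto
  also have "\<dots> = ennreal (c * A)"
  proof (cases "A \<ge> 0")
    case True thus ?thesis using c by (simp add: ennreal_mult[symmetric] ennreal_plus[symmetric] del: ennreal_plus)
  next
    case False
    hence "ennreal A = 0" "ennreal (c * A) = 0" using c by (auto simp: ennreal_eq_0_iff mult_nonneg_nonpos)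
    thus ?thesis by simp
  qed
  finally show ?thesis .
qed

lemma subgaussian_moments_diff:
  assumes [measurable]: "X \<in> borel_measurable M" "Z \<in> borel_measurable M"
    and X: "subgaussian_moments M X K2 K3 K4" and Z: "subgaussian_moments M Z K2 K3 K4"
  shows "subgaussian_moments M (\<lambda>\<omega>. X \<omega> - Z \<omega>) (2 * K2) (2 * K3) (2 * K4)"
proof -
  have K: "0 < K2" "0 < K3" "0 < K4" using X by (simp_all add: subgaussian_moments_def)
  have powr: "(\<integral>\<^sup>+\<omega>. ennreal (\<bar>X \<omega> - Z \<omega>\<bar> powr q) \<partial>M) \<le> ennreal ((2 * K2 * sqrt q) powr q)"
    if q: "q \<ge> 1" for q
  proof -
    have "(\<integral>\<^sup>+\<omega>. ennreal (\<bar>X \<omega> - Z \<omega>\<bar> powr q) \<partial>M) \<le> ennreal (2 powr q * (K2 * sqrt q) powr q)"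
      using X Z q abs_diff_powr_le[OF q] unfolding subgaussian_moments_def
      by (intro nn_integral_le_if_le_average[where f="\<lambda>\<omega>. \<bar>X \<omega>\<bar> powr q" and g="\<lambda>\<omega>. \<bar>Z \<omega>\<bar> powr q"])
         simp_all
    also have "2 powr q * (K2 * sqrt q) powr q = (2 * K2 * sqrt q) powr q"
      using K by (simp add: powr_mult)
    finally show ?thesis .
  qed
  have square: "(\<integral>\<^sup>+\<omega>. ennreal (exp ((X \<omega> - Z \<omega>)\<^sup>2 / (2 * K3)\<^sup>2)) \<partial>M) \<le> ennreal (1 * exp 1)"
    using X Z exp_square_diff_le[OF K(2)] unfolding subgaussian_moments_def
    by (intro nn_integral_le_if_le_average[where f="\<lambda>\<omega>. exp ((X \<omega>)\<^sup>2 / K3\<^sup>2)"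
          and g="\<lambda>\<omega>. exp ((Z \<omega>)\<^sup>2 / K3\<^sup>2)"]) simp_all
  have mgf: "(\<integral>\<^sup>+\<omega>. ennreal (exp (t * (X \<omega> - Z \<omega>))) \<partial>M) \<le> ennreal (exp (t\<^sup>2 * (2 * K4)\<^sup>2))" for t
  proof -
    have mgfX: "(\<integral>\<^sup>+\<omega>. ennreal (exp (s * X \<omega>)) \<partial>M) \<le> ennreal (exp (s\<^sup>2 * K4\<^sup>2))"
      and mgfZ: "(\<integral>\<^sup>+\<omega>. ennreal (exp (s * Z \<omega>)) \<partial>M) \<le> ennreal (exp (s\<^sup>2 * K4\<^sup>2))" for s
      using X Z by (simp_all add: subgaussian_moments_def)
    have "(\<integral>\<^sup>+\<omega>. ennreal (exp (t * (X \<omega> - Z \<omega>))) \<partial>M) \<le> ennreal (1 * exp ((2 * t)\<^sup>2 * K4\<^sup>2))"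
      by (intro nn_integral_le_if_le_average[where f="\<lambda>\<omega>. exp (2 * t * X \<omega>)"
            and g="\<lambda>\<omega>. exp (- (2 * t) * Z \<omega>)"])
         (use mgfX[of "2 * t"] mgfZ[of "- (2 * t)"] exp_cmult_diff_le in auto)
    thus ?thesis by (simp add: power_mult_distrib mult_ac)
  qed
  show ?thesis using K powr square mgf by (simp add: subgaussian_moments_def)
qed

context prob_space
begin

lemma prob_abs_gt_le_exp_square_moment:
  assumes [measurable]: "z \<in> borel_measurable M" and a: "a > 0"
    and E: "(\<integral>\<^sup>+\<omega>. ennreal (exp ((z \<omega>)\<^sup>2 / a\<^sup>2)) \<partial>M) \<le> ennreal (exp 1)" and t: "t \<ge> 0"
  shows "measure M {\<omega>\<in>space M. \<bar>z \<omega>\<bar> > t} \<le> exp (1 - t\<^sup>2 / a\<^sup>2)"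
proof -
  define c where "c = ennreal (exp (- t\<^sup>2 / a\<^sup>2))"
  define u where "u = (\<lambda>\<omega>. ennreal (exp ((z \<omega>)\<^sup>2 / a\<^sup>2)))"
  have "1 \<le> c * u \<omega>" if "\<bar>z \<omega>\<bar> > t" for \<omega>
  proof -
    have "t\<^sup>2 < \<bar>z \<omega>\<bar>\<^sup>2" using that t by (intro power_strict_mono) auto
    hence "t\<^sup>2 / a\<^sup>2 \<le> (z \<omega>)\<^sup>2 / a\<^sup>2" using a by (intro divide_right_mono) auto
    hence "1 \<le> exp (- t\<^sup>2 / a\<^sup>2) * exp ((z \<omega>)\<^sup>2 / a\<^sup>2)" by (simp add: exp_add[symmetric])
    thus ?thesis unfolding c_def u_def by (simp add: ennreal_mult'[symmetric])
  qed
  hence "emeasure M {\<omega>\<in>space M. \<bar>z \<omega>\<bar> > t} \<le> emeasure M {\<omega>\<in>space M. 1 \<le> c * u \<omega>}"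
    by (intro emeasure_mono) (auto simp: u_def c_def)
  also have "\<dots> \<le> c * (\<integral>\<^sup>+ \<omega>. u \<omega> * indicator (space M) \<omega> \<partial>M)"
    by (rule nn_integral_Markov_inequality) (auto simp: u_def)
  also have "(\<integral>\<^sup>+ \<omega>. u \<omega> * indicator (space M) \<omega> \<partial>M) = (\<integral>\<^sup>+ \<omega>. u \<omega> \<partial>M)"
    by (intro nn_integral_cong) auto
  also have "c * (\<integral>\<^sup>+ \<omega>. u \<omega> \<partial>M) \<le> c * ennreal (exp 1)"
    using E unfolding u_def by (intro mult_left_mono) auto
  also have "\<dots> = ennreal (exp (1 - t\<^sup>2 / a\<^sup>2))"
    unfolding c_def by (simp add: ennreal_mult'[symmetric] exp_add[symmetric])
  finally show ?thesis by (simp add: emeasure_eq_measure)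
qed

lemma subgaussian_if_tail_le:
  assumes z: "z \<in> borel_measurable M" and a: "a > 0"
    and T: "\<And>t. t \<ge> 0 \<Longrightarrow> measure M {\<omega>\<in>space M. \<bar>z \<omega>\<bar> > t} \<le> exp (1 - t\<^sup>2 / a\<^sup>2)"
  shows "subgaussian M z"
  unfolding subgaussian_def
proof (intro conjI z exI[of _ "2 * a"] allI impI)
  show "2 * a > 0" using a by simp
  fix t :: real assume t: "t \<ge> 0"
  define u where "u = t\<^sup>2 / a\<^sup>2"
  have L: "t\<^sup>2 / (2 * a)\<^sup>2 = u / 4" by (simp add: u_def power2_eq_square field_simps)
  show "measure M {\<omega>\<in>space M. \<bar>z \<omega>\<bar> > t} \<le> 2 * exp (- (t\<^sup>2 / (2 * a)\<^sup>2))"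
  proof (cases "u \<le> 2")
    case True
    have "1/2 \<le> 1 + (- (u/4))" using True by simp
    also have "\<dots> \<le> exp (- (u/4))" by (rule exp_ge_add_one_self)
    finally show ?thesis unfolding L using prob_le_1[of "{\<omega>\<in>space M. \<bar>z \<omega>\<bar> > t}"] by linarith
  next
    case False
    have "measure M {\<omega>\<in>space M. \<bar>z \<omega>\<bar> > t} \<le> exp (1 - u)" using T[OF t] by (simp add: u_def)
    also have "\<dots> \<le> exp (- (u/4))" using False by simp
    also have "\<dots> \<le> 2 * exp (- (u/4))" by simp
    finally show ?thesis unfolding L .
  qed
qed

lemma subgaussian_if_exp_square_moment:
  assumes "z \<in> borel_measurable M" "a > 0"
    "(\<integral>\<^sup>+\<omega>. ennreal (exp ((z \<omega>)\<^sup>2 / a\<^sup>2)) \<partial>M) \<le> ennreal (exp 1)"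
  shows "subgaussian M z"
  using assms by (intro subgaussian_if_tail_le prob_abs_gt_le_exp_square_moment)

text \<open>The tail condition of \<open>upexp_bounded\<close> follows from the exp-square moment by Markov's
  inequality, so \<open>K3\<close> also serves as \<open>K1\<close>.\<close>

lemma upexp_bounded_if_subgaussian_moments:
  assumes "z \<in> borel_measurable M" "subgaussian_moments M z K2 K3 K4" "K2 < K" "K3 < K" "K4 < K"
  shows "upexp_bounded M z K"
  unfolding upexp_bounded_def
  by (rule exI[of _ K3], rule exI[of _ K2], rule exI[of _ K3], rule exI[of _ K4])
     (use assms in \<open>auto simp: subgaussian_moments_def intro: prob_abs_gt_le_exp_square_moment\<close>)

lemma nn_integral_convex_real_cond_exp_le:
  fixes q :: "real \<Rightarrow> real"
  assumes F: "subalgebra M F" and X: "integrable M X"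
    and cv: "convex_on UNIV q" and [measurable]: "q \<in> borel_measurable borel"
    and q0: "\<And>x. q x \<ge> 0" and qX: "integrable M (\<lambda>\<omega>. q (X \<omega>))"
  shows "(\<integral>\<^sup>+\<omega>. ennreal (q (real_cond_exp M F X \<omega>)) \<partial>M) \<le> (\<integral>\<^sup>+\<omega>. ennreal (q (X \<omega>)) \<partial>M)"
proof -
  interpret finite_measure_subalgebra M F by unfold_locales (rule F)
  have J: "AE \<omega> in M. q (real_cond_exp M F X \<omega>) \<le> real_cond_exp M F (\<lambda>x. q (X x)) \<omega>"
    by (rule real_cond_exp_jensens_inequality(2)[where I=UNIV]) (use X qX cv in auto)
  have pos: "AE \<omega> in M. real_cond_exp M F (\<lambda>x. q (X x)) \<omega> \<ge> 0"
    using qX by (intro real_cond_exp_pos) (auto simp: q0)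
  have "(\<integral>\<^sup>+\<omega>. ennreal (q (real_cond_exp M F X \<omega>)) \<partial>M) \<le>
        (\<integral>\<^sup>+\<omega>. ennreal (real_cond_exp M F (\<lambda>x. q (X x)) \<omega>) \<partial>M)"
    using J by (intro nn_integral_mono_AE) (auto elim!: eventually_mono intro: ennreal_leI)
  also have "\<dots> = ennreal (\<integral>\<omega>. real_cond_exp M F (\<lambda>x. q (X x)) \<omega> \<partial>M)"
    by (intro nn_integral_eq_integral real_cond_exp_int(1) qX pos)
  also have "\<dots> = ennreal (\<integral>\<omega>. q (X \<omega>) \<partial>M)"
    by (simp add: real_cond_exp_int(2) qX)
  also have "\<dots> = (\<integral>\<^sup>+\<omega>. ennreal (q (X \<omega>)) \<partial>M)"
    by (intro nn_integral_eq_integral[symmetric] qX) (auto simp: q0)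
  finally show ?thesis .
qed

lemma subgaussian_moments_real_cond_exp:
  assumes F: "subalgebra M F" and X: "integrable M X" and mom: "subgaussian_moments M X K2 K3 K4"
  shows "subgaussian_moments M (real_cond_exp M F X) K2 K3 K4"
proof -
  have Xm[measurable]: "X \<in> borel_measurable M" using X by auto
  have jensen: "(\<integral>\<^sup>+\<omega>. ennreal (q (real_cond_exp M F X \<omega>)) \<partial>M) \<le> ennreal B"
    if "convex_on UNIV q" "q \<in> borel_measurable borel" "\<And>x. q x \<ge> 0"
      "(\<integral>\<^sup>+\<omega>. ennreal (q (X \<omega>)) \<partial>M) \<le> ennreal B" for q B
  proof -
    have [measurable]: "q \<in> borel_measurable borel" by fact
    have "integrable M (\<lambda>\<omega>. q (X \<omega>))"
      using that(3,4) by (intro integrable_if_nn_integral_le) auto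
    from nn_integral_convex_real_cond_exp_le[OF F X that(1,2,3) this] that(4) show ?thesis
      by (rule order.trans)
  qed
  have K: "0 < K2" "0 < K3" "0 < K4"
    and mom_q: "\<And>q. q \<ge> 1 \<Longrightarrow> (\<integral>\<^sup>+\<omega>. ennreal (\<bar>X \<omega>\<bar> powr q) \<partial>M) \<le> ennreal ((K2 * sqrt q) powr q)"
    and mom_sq: "(\<integral>\<^sup>+\<omega>. ennreal (exp ((X \<omega>)\<^sup>2 / K3\<^sup>2)) \<partial>M) \<le> ennreal (exp 1)"
    and mom_exp: "\<And>t. (\<integral>\<^sup>+\<omega>. ennreal (exp (t * X \<omega>)) \<partial>M) \<le> ennreal (exp (t\<^sup>2 * K4\<^sup>2))"
    using mom by (auto simp: subgaussian_moments_def)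
  have "convex_on UNIV (\<lambda>x. exp (x\<^sup>2 / K3\<^sup>2))"
    using convex_on_exp_cmult_square[of "1 / K3\<^sup>2"] by simp
  thus ?thesis
    unfolding subgaussian_moments_def
    using K jensen[OF convex_on_abs_powr _ _ mom_q] jensen[OF _ _ _ mom_sq]
      jensen[OF convex_on_exp_cmult _ _ mom_exp]
    by simp
qed

lemma real_cond_exp_and_residual_upexp_bounded:
  assumes [measurable]: "Y \<in> borel_measurable M"
    and X: "integrable M X" "(\<integral>\<omega>. X \<omega> \<partial>M) = 0" and ub: "upexp_bounded M X K"
  defines "m \<equiv> real_cond_exp M (vimage_algebra (space M) Y borel) X"
  shows "subgaussian M m \<and> upexp_bounded M m K \<and>
         subgaussian M (\<lambda>\<omega>. X \<omega> - m \<omega>) \<and> upexp_bounded M (\<lambda>\<omega>. X \<omega> - m \<omega>) (2 * K)"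
proof -
  obtain K2 K3 K4 where momX: "subgaussian_moments M X K2 K3 K4" and K: "K2 < K" "K3 < K" "K4 < K"
    using upexp_bounded_subgaussian_moments[OF ub X] .
  have F: "subalgebra M (vimage_algebra (space M) Y borel)"
    by (auto simp: subalgebra_def sets_vimage_algebra2 measurable_sets)
  have [measurable]: "X \<in> borel_measurable M" "m \<in> borel_measurable M"
    using X(1) by (auto simp: m_def)
  have momm: "subgaussian_moments M m K2 K3 K4"
    unfolding m_def by (rule subgaussian_moments_real_cond_exp[OF F X(1) momX])
  have mome: "subgaussian_moments M (\<lambda>\<omega>. X \<omega> - m \<omega>) (2 * K2) (2 * K3) (2 * K4)"
    by (rule subgaussian_moments_diff[OF _ _ momX momm]) auto
  have "2 * K2 < 2 * K" "2 * K3 < 2 * K" "2 * K4 < 2 * K" using K by simp_all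
  hence "upexp_bounded M m K" "upexp_bounded M (\<lambda>\<omega>. X \<omega> - m \<omega>) (2 * K)"
    using upexp_bounded_if_subgaussian_moments[OF _ momm K] mome
      upexp_bounded_if_subgaussian_moments[OF _ mome] by auto
  moreover have "subgaussian M m" "subgaussian M (\<lambda>\<omega>. X \<omega> - m \<omega>)"
    using momm mome
    by (auto simp: subgaussian_moments_def intro: subgaussian_if_exp_square_moment[where a=K3]
          subgaussian_if_exp_square_moment[where a="2 * K3"])
  ultimately show ?thesis by blast
qed

end

section \<open>Sections of the joint density\<close>

lemma AE_nn_integral_section_finite:
  fixes g :: "real \<Rightarrow> ennreal" and f :: "real \<times> 'b \<Rightarrow> ennreal"
  assumes N: "sigma_finite_measure N"
    and joint: "distributed M (lborel \<Otimes>\<^sub>M N) (\<lambda>\<omega>. (X \<omega>, Y \<omega>)) f"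
    and [measurable]: "g \<in> borel_measurable borel"
    and fin: "(\<integral>\<^sup>+\<omega>. g (X \<omega>) \<partial>M) \<noteq> \<infinity>"
  shows "AE \<omega> in M. (\<integral>\<^sup>+x. g x * f (x, Y \<omega>) \<partial>lborel) \<noteq> \<infinity>"
proof -
  interpret N: sigma_finite_measure N by fact
  interpret P: pair_sigma_finite lborel N ..
  have [measurable]: "f \<in> borel_measurable (lborel \<Otimes>\<^sub>M N)"
    "(\<lambda>\<omega>. (X \<omega>, Y \<omega>)) \<in> measurable M (lborel \<Otimes>\<^sub>M N)"
    using distributed_borel_measurable[OF joint] distributed_measurable[OF joint] by auto
  have Ym: "Y \<in> measurable M N"
    using measurable_snd'[of "\<lambda>\<omega>. (X \<omega>, Y \<omega>)" M lborel N] by simp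
  define G where "G = (\<lambda>y. \<integral>\<^sup>+x. g x * f (x, y) \<partial>lborel)"
  have [measurable]: "G \<in> borel_measurable N"
    unfolding G_def by measurable
  have "(\<integral>\<^sup>+y. G y \<partial>N) = (\<integral>\<^sup>+p. f p * g (fst p) \<partial>(lborel \<Otimes>\<^sub>M N))"
    using P.nn_integral_snd[of "\<lambda>p. f p * g (fst p)"] unfolding G_def by (simp add: mult.commute)
  also have "\<dots> = (\<integral>\<^sup>+\<omega>. g (X \<omega>) \<partial>M)"
    by (subst distributed_nn_integral[OF joint]) auto
  finally have "AE y in N. G y \<noteq> \<infinity>"
    using fin by (intro nn_integral_PInf_AE) auto
  define B where "B = {y\<in>space N. G y = \<infinity>}"
  have [measurable]: "B \<in> sets N" unfolding B_def by measurable
  have "(\<integral>\<^sup>+\<omega>. indicator B (Y \<omega>) \<partial>M) = (\<integral>\<^sup>+p. f p * indicator B (snd p) \<partial>(lborel \<Otimes>\<^sub>M N))"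
    by (subst distributed_nn_integral[OF joint]) auto
  also have "\<dots> = (\<integral>\<^sup>+y. (\<integral>\<^sup>+x. f (x, y) * indicator B y \<partial>lborel) \<partial>N)"
    by (subst P.nn_integral_snd[symmetric]) auto
  also have "\<dots> = (\<integral>\<^sup>+y. 0 \<partial>N)"
    using \<open>AE y in N. G y \<noteq> \<infinity>\<close> by (intro nn_integral_cong_AE) (auto simp: B_def elim!: eventually_mono)
  finally have "(\<integral>\<^sup>+\<omega>. indicator B (Y \<omega>) \<partial>M) = 0" by simp
  hence "AE \<omega> in M. indicator B (Y \<omega>) = (0::ennreal)"
    using Ym by (subst (asm) nn_integral_0_iff_AE) auto
  hence "AE \<omega> in M. Y \<omega> \<notin> B" by (auto elim!: eventually_mono simp: indicator_def)
  thus ?thesis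
    using Ym by (auto simp: B_def G_def measurable_space elim!: eventually_mono)
qed

lemma AE_exp_square_section_finite:
  fixes f :: "real \<times> 'b \<Rightarrow> ennreal"
  assumes "sigma_finite_measure N"
    and "distributed M (lborel \<Otimes>\<^sub>M N) (\<lambda>\<omega>. (X \<omega>, Y \<omega>)) f"
    and "(\<integral>\<^sup>+\<omega>. ennreal (exp (t0 * (X \<omega>)\<^sup>2)) \<partial>M) \<noteq> \<infinity>"
  shows "AE \<omega> in M. Y \<omega> \<notin> {y. \<exists>t\<in>{0<..t0}. (\<integral>\<^sup>+x. ennreal (exp (t * x\<^sup>2)) * f (x, y) \<partial>lborel) = \<infinity>}"
  using AE_nn_integral_section_finite[OF assms(1,2) _ assms(3)]
proof (rule eventually_mono)
  fix \<omega> assume fin: "(\<integral>\<^sup>+x. ennreal (exp (t0 * x\<^sup>2)) * f (x, Y \<omega>) \<partial>lborel) \<noteq> \<infinity>"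
  show "Y \<omega> \<notin> {y. \<exists>t\<in>{0<..t0}. (\<integral>\<^sup>+x. ennreal (exp (t * x\<^sup>2)) * f (x, y) \<partial>lborel) = \<infinity>}"
  proof safe
    fix t assume t: "t \<in> {0<..t0}" and inf: "(\<integral>\<^sup>+x. ennreal (exp (t * x\<^sup>2)) * f (x, Y \<omega>) \<partial>lborel) = \<infinity>"
    have "(\<integral>\<^sup>+x. ennreal (exp (t * x\<^sup>2)) * f (x, Y \<omega>) \<partial>lborel)
          \<le> (\<integral>\<^sup>+x. ennreal (exp (t0 * x\<^sup>2)) * f (x, Y \<omega>) \<partial>lborel)"
      using t by (intro nn_integral_mono mult_right_mono ennreal_leI) (auto intro: mult_right_mono)
    with fin inf show False by (simp add: top_unique)
  qed
qed measurable

section \<open>Conditioning on an event\<close>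

context prob_space
begin

lemma measure_uniform_measure_le:
  assumes A: "A \<in> sets M" and p: "0 < p" "p \<le> measure M A" and B: "B \<in> sets M"
  shows "measure (uniform_measure M A) B \<le> measure M B / p"
proof -
  have "emeasure M A \<noteq> 0" using p by (simp add: emeasure_eq_measure)
  hence "measure (uniform_measure M A) B = measure M (A \<inter> B) / measure M A"
    using B by (intro measure_uniform_measure) auto
  also have "\<dots> \<le> measure M B / measure M A"
    using p B by (intro divide_right_mono finite_measure_mono) auto
  also have "\<dots> \<le> measure M B / p" using p by (intro divide_left_mono) auto
  finally show ?thesis .
qed

lemma nn_integral_uniform_measure_le:
  assumes A: "A \<in> sets M" and p: "0 < p" "p \<le> measure M A" and [measurable]: "g \<in> borel_measurable M"
  shows "(\<integral>\<^sup>+\<omega>. g \<omega> \<partial>uniform_measure M A) \<le> ennreal (1/p) * (\<integral>\<^sup>+\<omega>. g \<omega> \<partial>M)"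
proof -
  have "(\<integral>\<^sup>+\<omega>. g \<omega> \<partial>uniform_measure M A) = (\<integral>\<^sup>+\<omega>. g \<omega> * indicator A \<omega> \<partial>M) / emeasure M A"
    by (rule nn_integral_uniform_measure) (use A in auto)
  also have "\<dots> = ennreal (1 / measure M A) * (\<integral>\<^sup>+\<omega>. g \<omega> * indicator A \<omega> \<partial>M)"
    using p by (simp add: emeasure_eq_measure divide_ennreal_def ennreal_inverse_positive
        inverse_eq_divide ennreal_divide_times mult.commute divide_ennreal[symmetric])
  also have "\<dots> \<le> ennreal (1/p) * (\<integral>\<^sup>+\<omega>. g \<omega> \<partial>M)"
    using p by (intro mult_mono ennreal_leI nn_integral_mono) (auto simp: frac_le indicator_def)
  finally show ?thesis .
qed

lemma uniform_measure_tail_le: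
  assumes A: "A \<in> sets M" and p: "0 < p" "p \<le> measure M A"
    and [measurable]: "X \<in> borel_measurable M" and K: "K > 0"
    and E: "(\<integral>\<^sup>+\<omega>. ennreal (exp ((X \<omega>)\<^sup>2 / K\<^sup>2)) \<partial>M) \<le> ennreal (exp 1)" and t: "t \<ge> 0"
  shows "measure (uniform_measure M A) {\<omega>\<in>space M. X \<omega> > t} \<le> exp (1 - t\<^sup>2 / K\<^sup>2) / p"
proof -
  have "measure (uniform_measure M A) {\<omega>\<in>space M. X \<omega> > t} \<le> measure M {\<omega>\<in>space M. X \<omega> > t} / p"
    using A p by (intro measure_uniform_measure_le) auto
  also have "\<dots> \<le> measure M {\<omega>\<in>space M. \<bar>X \<omega>\<bar> > t} / p"
    using p by (intro divide_right_mono finite_measure_mono) auto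
  also have "\<dots> \<le> exp (1 - t\<^sup>2 / K\<^sup>2) / p"
    using p prob_abs_gt_le_exp_square_moment[OF _ K E t] by (intro divide_right_mono) auto
  finally show ?thesis .
qed

lemma uniform_measure_exp_square_le:
  assumes A: "A \<in> sets M" and p: "0 < p" "p \<le> measure M A"
    and [measurable]: "X \<in> borel_measurable M" and K: "K > 0"
    and E: "(\<integral>\<^sup>+\<omega>. ennreal (exp ((X \<omega>)\<^sup>2 / K\<^sup>2)) \<partial>M) \<le> ennreal (exp 1)"
  shows "(\<integral>\<^sup>+\<omega>. ennreal (exp ((X \<omega>)\<^sup>2 / (2 * K\<^sup>2))) \<partial>uniform_measure M A) \<le> ennreal (exp 1 / p)"
proof -
  have "(X \<omega>)\<^sup>2 / (2 * K\<^sup>2) \<le> (X \<omega>)\<^sup>2 / K\<^sup>2" for \<omega>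
    using K by (intro divide_left_mono) auto
  hence "(\<integral>\<^sup>+\<omega>. ennreal (exp ((X \<omega>)\<^sup>2 / (2 * K\<^sup>2))) \<partial>M) \<le> ennreal (exp 1)"
    by (intro order.trans[OF nn_integral_mono E] ennreal_leI) simp
  hence "ennreal (1/p) * (\<integral>\<^sup>+\<omega>. ennreal (exp ((X \<omega>)\<^sup>2 / (2 * K\<^sup>2))) \<partial>M) \<le> ennreal (1/p) * ennreal (exp 1)"
    by (rule mult_left_mono) simp
  also have "\<dots> = ennreal (exp 1 / p)" using p by (simp add: ennreal_mult[symmetric])
  finally show ?thesis
    using nn_integral_uniform_measure_le[OF A p, of "\<lambda>\<omega>. ennreal (exp ((X \<omega>)\<^sup>2 / (2 * K\<^sup>2)))"]
    by simp
qed

lemma uniform_measure_abs_power_le: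
  assumes A: "A \<in> sets M" and p: "0 < p" "p \<le> measure M A"
    and [measurable]: "X \<in> borel_measurable M" and K: "K > 0"
    and E: "(\<integral>\<^sup>+\<omega>. ennreal (exp ((X \<omega>)\<^sup>2 / K\<^sup>2)) \<partial>M) \<le> ennreal (exp 1)" and m: "m \<ge> 1"
  shows "(\<integral>\<^sup>+\<omega>. ennreal (\<bar>X \<omega>\<bar> ^ m) \<partial>uniform_measure M A)
           \<le> ennreal (exp 1 / p * K ^ m * (real m * Gamma (real m / 2) / 2))"
proof -
  define \<Gamma> where "\<Gamma> = real m * Gamma (real m / 2) / 2"
  have \<Gamma>: "\<Gamma> \<ge> 0" using m by (simp add: \<Gamma>_def)
  have "(\<integral>\<^sup>+\<omega>. ennreal (\<bar>X \<omega>\<bar> ^ m) \<partial>M) \<le> (\<integral>\<^sup>+\<omega>. ennreal (K ^ m * \<Gamma>) * ennreal (exp ((X \<omega>)\<^sup>2 / K\<^sup>2)) \<partial>M)"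
    using abs_power_le_Gamma_exp_square[OF K m] \<Gamma> K
    by (intro nn_integral_mono) (simp add: ennreal_mult[symmetric] ennreal_leI \<Gamma>_def)
  also have "\<dots> = ennreal (K ^ m * \<Gamma>) * (\<integral>\<^sup>+\<omega>. ennreal (exp ((X \<omega>)\<^sup>2 / K\<^sup>2)) \<partial>M)"
    by (rule nn_integral_cmult) measurable
  also have "\<dots> \<le> ennreal (K ^ m * \<Gamma>) * ennreal (exp 1)" using E by (intro mult_left_mono) auto
  finally have "ennreal (1/p) * (\<integral>\<^sup>+\<omega>. ennreal (\<bar>X \<omega>\<bar> ^ m) \<partial>M)
      \<le> ennreal (1/p) * (ennreal (K ^ m * \<Gamma>) * ennreal (exp 1))"
    by (rule mult_left_mono) simp
  also have "\<dots> = ennreal (exp 1 / p * K ^ m * \<Gamma>)"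
    using p K \<Gamma> by (simp add: ennreal_mult[symmetric] mult_ac)
  finally show ?thesis
    using nn_integral_uniform_measure_le[OF A p, of "\<lambda>\<omega>. ennreal (\<bar>X \<omega>\<bar> ^ m)"]
    unfolding \<Gamma>_def by simp
qed

section \<open>Bernstein's inequality\<close>

lemma centered_exp_le_weighted_second_moment:
  assumes [measurable]: "X \<in> borel_measurable M"
    and intG: "integrable M (\<lambda>\<omega>. (X \<omega>)\<^sup>2 * exp (2 * \<bar>l\<bar> * \<bar>X \<omega>\<bar>))"
  shows "(\<integral>\<^sup>+\<omega>. ennreal (exp (l * (X \<omega> - expectation X))) \<partial>M)
           \<le> ennreal (exp (4 * l\<^sup>2 * expectation (\<lambda>\<omega>. (X \<omega>)\<^sup>2 * exp (2 * \<bar>l\<bar> * \<bar>X \<omega>\<bar>))))"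
proof -
  define G where "G = (\<lambda>x::real. x\<^sup>2 * exp (2 * \<bar>l\<bar> * \<bar>x\<bar>))"
  define \<mu> where "\<mu> = expectation X"
  define R where "R = (\<lambda>\<omega>. 1 + l * (X \<omega> - \<mu>) + 2 * l\<^sup>2 * (G (X \<omega>) + G \<mu>))"
  have intG: "integrable M (\<lambda>\<omega>. G (X \<omega>))" using intG by (simp add: G_def)
  have intX: "integrable M X"
  proof (rule Bochner_Integration.integrable_bound[OF Bochner_Integration.integrable_add[OF integrable_const intG]])
    have "\<bar>x\<bar> \<le> 1 + G x" for x
    proof -
      have "\<bar>x\<bar> \<le> 1 + x\<^sup>2" using zero_le_square[of "\<bar>x\<bar> - 1"] by (simp add: power2_eq_square algebra_simps)
      also have "x\<^sup>2 \<le> G x" by (simp add: G_def mult_le_cancel_left1)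
      finally show ?thesis by simp
    qed
    thus "AE \<omega> in M. norm (X \<omega>) \<le> norm (1 + G (X \<omega>))" by (simp add: G_def)
  qed simp
  have jensen: "G \<mu> \<le> expectation (\<lambda>\<omega>. G (X \<omega>))"
    unfolding \<mu>_def using intX intG convex_on_square_exp_abs[of "\<bar>l\<bar>"]
    by (intro jensens_inequality[where I=UNIV]) (auto simp: G_def)
  have bound: "exp (l * (X \<omega> - \<mu>)) \<le> R \<omega>" for \<omega>
    unfolding R_def G_def by (rule exp_le_second_order_centered)
  have intR: "integrable M R" unfolding R_def using intX intG by auto
  have intE: "integrable M (\<lambda>\<omega>. exp (l * (X \<omega> - \<mu>)))"
    using bound by (intro Bochner_Integration.integrable_bound[OF intR]) (auto intro: order.trans[OF _ abs_ge_self])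
  have "expectation (\<lambda>\<omega>. exp (l * (X \<omega> - \<mu>))) \<le> expectation R"
    by (intro integral_mono intE intR bound)
  also have "\<dots> = 1 + 2 * l\<^sup>2 * (expectation (\<lambda>\<omega>. G (X \<omega>)) + G \<mu>)"
    unfolding R_def using intX intG by (simp add: \<mu>_def prob_space)
  also have "\<dots> \<le> 1 + 4 * l\<^sup>2 * expectation (\<lambda>\<omega>. G (X \<omega>))"
    using mult_left_mono[OF add_left_mono[OF jensen, of "expectation (\<lambda>\<omega>. G (X \<omega>))"], of "2 * l\<^sup>2"]
    by simp
  also have "\<dots> \<le> exp (4 * l\<^sup>2 * expectation (\<lambda>\<omega>. G (X \<omega>)))"
    by (rule exp_ge_add_one_self[THEN order_trans[rotated]]) simp
  finally have "expectation (\<lambda>\<omega>. exp (l * (X \<omega> - \<mu>))) \<le> exp (4 * l\<^sup>2 * expectation (\<lambda>\<omega>. G (X \<omega>)))" .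
  thus ?thesis
    using nn_integral_eq_integral[OF intE] by (simp add: \<mu>_def G_def ennreal_leI)
qed

lemma uniform_measure_centered_exp_le:
  assumes A: "A \<in> sets M" and p: "0 < p" "p \<le> measure M A"
    and [measurable]: "X \<in> borel_measurable M" and K: "K > 0"
    and E: "(\<integral>\<^sup>+\<omega>. ennreal (exp ((X \<omega>)\<^sup>2 / K\<^sup>2)) \<partial>M) \<le> ennreal (exp 1)" and l: "\<bar>l\<bar> \<le> 1 / K"
  defines "Q \<equiv> uniform_measure M A"
  shows "(\<integral>\<^sup>+\<omega>. ennreal (exp (l * (X \<omega> - (\<integral>\<omega>'. X \<omega>' \<partial>Q)))) \<partial>Q)
           \<le> ennreal (exp (l\<^sup>2 * (8 * exp 3 * K\<^sup>2 / p)))"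
proof -
  define G where "G = (\<lambda>x::real. x\<^sup>2 * exp (2 * \<bar>l\<bar> * \<bar>x\<bar>))"
  define \<gamma> where "\<gamma> = 2 * exp 3 * K\<^sup>2 / p"
  have "emeasure M A \<noteq> 0" using p by (simp add: emeasure_eq_measure)
  then interpret Q: prob_space Q unfolding Q_def by (intro prob_space_uniform_measure) auto
  have XQ[measurable]: "X \<in> borel_measurable Q"
    unfolding Q_def by (simp add: measurable_cong_sets[OF sets_uniform_measure refl])
  have "(\<integral>\<^sup>+\<omega>. ennreal (G (X \<omega>)) \<partial>M) \<le> (\<integral>\<^sup>+\<omega>. ennreal (2 * exp 2 * K\<^sup>2) * ennreal (exp ((X \<omega>)\<^sup>2 / K\<^sup>2)) \<partial>M)"
    unfolding G_def using square_exp_abs_le_exp_square[OF K l]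
    by (intro nn_integral_mono) (simp add: ennreal_mult[symmetric] ennreal_leI)
  also have "\<dots> = ennreal (2 * exp 2 * K\<^sup>2) * (\<integral>\<^sup>+\<omega>. ennreal (exp ((X \<omega>)\<^sup>2 / K\<^sup>2)) \<partial>M)"
    by (rule nn_integral_cmult) measurable
  also have "\<dots> \<le> ennreal (2 * exp 2 * K\<^sup>2) * ennreal (exp 1)"
    using E by (intro mult_left_mono) auto
  finally have "ennreal (1/p) * (\<integral>\<^sup>+\<omega>. ennreal (G (X \<omega>)) \<partial>M) \<le> ennreal (1/p) * (ennreal (2 * exp 2 * K\<^sup>2) * ennreal (exp 1))"
    by (rule mult_left_mono) simp
  also have "\<dots> = ennreal \<gamma>"
    using p by (simp add: \<gamma>_def ennreal_mult[symmetric] exp_add[symmetric])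
  finally have EG: "(\<integral>\<^sup>+\<omega>. ennreal (G (X \<omega>)) \<partial>Q) \<le> ennreal \<gamma>"
    using nn_integral_uniform_measure_le[OF A p, of "\<lambda>\<omega>. ennreal (G (X \<omega>))"]
    unfolding Q_def G_def by simp
  have intG: "integrable Q (\<lambda>\<omega>. G (X \<omega>))"
    using EG by (intro integrable_if_nn_integral_le) (auto simp: G_def)
  have "Q.expectation (\<lambda>\<omega>. G (X \<omega>)) \<le> \<gamma>"
    using EG nn_integral_eq_integral[OF intG] p by (simp add: G_def \<gamma>_def ennreal_le_iff)
  hence "4 * l\<^sup>2 * Q.expectation (\<lambda>\<omega>. G (X \<omega>)) \<le> 4 * l\<^sup>2 * \<gamma>"
    by (intro mult_left_mono) auto
  also have "4 * l\<^sup>2 * \<gamma> = l\<^sup>2 * (8 * exp 3 * K\<^sup>2 / p)" by (simp add: \<gamma>_def)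
  finally have "exp (4 * l\<^sup>2 * Q.expectation (\<lambda>\<omega>. G (X \<omega>))) \<le> exp (l\<^sup>2 * (8 * exp 3 * K\<^sup>2 / p))"
    by simp
  with Q.centered_exp_le_weighted_second_moment[OF XQ, of l] intG show ?thesis
    unfolding G_def by (meson ennreal_leI order.trans)
qed

lemma prob_sum_ge_le_if_mgf_le:
  fixes Z :: "'i \<Rightarrow> 'a \<Rightarrow> real"
  assumes I: "finite I" and ind: "indep_vars (\<lambda>_. borel) Z I" and l: "l > 0"
    and mgf: "\<And>i. i \<in> I \<Longrightarrow> (\<integral>\<^sup>+\<omega>. ennreal (exp (l * Z i \<omega>)) \<partial>M) \<le> ennreal (exp (l\<^sup>2 * s))"
  shows "measure M {\<omega>\<in>space M. (\<Sum>i\<in>I. Z i \<omega>) \<ge> a} \<le> exp (real (card I) * l\<^sup>2 * s - l * a)"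
proof -
  have [measurable]: "\<And>i. i \<in> I \<Longrightarrow> Z i \<in> borel_measurable M"
    using ind unfolding indep_vars_def by auto
  have "emeasure M {\<omega>\<in>space M. (\<Sum>i\<in>I. Z i \<omega>) \<ge> a} \<le>
        ennreal (exp (-l * a)) * (\<integral>\<^sup>+\<omega>. ennreal (exp (l * (\<Sum>i\<in>I. Z i \<omega>))) * indicator (space M) \<omega> \<partial>M)"
    by (rule Chernoff_ineq_nn_integral_ge[OF l]) auto
  also have "(\<integral>\<^sup>+\<omega>. ennreal (exp (l * (\<Sum>i\<in>I. Z i \<omega>))) * indicator (space M) \<omega> \<partial>M) =
             (\<integral>\<^sup>+\<omega>. (\<Prod>i\<in>I. ennreal (exp (l * Z i \<omega>))) \<partial>M)"
    by (intro nn_integral_cong) (simp_all add: sum_distrib_left exp_sum I prod_ennreal)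
  also have "\<dots> = (\<Prod>i\<in>I. \<integral>\<^sup>+\<omega>. ennreal (exp (l * Z i \<omega>)) \<partial>M)"
    by (intro indep_vars_nn_integral I indep_vars_compose2[OF ind]) auto
  also have "ennreal (exp (-l * a)) * \<dots> \<le> ennreal (exp (-l * a)) * (\<Prod>i\<in>I. ennreal (exp (l\<^sup>2 * s)))"
    by (intro mult_left_mono prod_mono_ennreal mgf) auto
  also have "(\<Prod>i\<in>I. ennreal (exp (l\<^sup>2 * s))) = ennreal (exp (real (card I) * (l\<^sup>2 * s)))"
    by (simp add: exp_of_nat_mult ennreal_power)
  also have "ennreal (exp (-l * a)) * \<dots> = ennreal (exp (real (card I) * l\<^sup>2 * s - l * a))"
    by (simp add: ennreal_mult[symmetric] exp_add[symmetric] algebra_simps)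
  finally show ?thesis by (simp add: emeasure_eq_measure)
qed

text \<open>Chernoff's bound is taken at \<open>l = t / (D + t K)\<close>, which is admissible since \<open>l \<le> 1 / K\<close>.\<close>

lemma prob_sum_ge_le_bernstein:
  fixes Z :: "nat \<Rightarrow> 'a \<Rightarrow> real"
  assumes ind: "indep_vars (\<lambda>_. borel) Z {..<c}" and t: "t > 0" and K: "K > 0" and D: "D > 0"
    and s: "s \<le> D / 2"
    and mgf: "\<And>i l. i < c \<Longrightarrow> 0 < l \<Longrightarrow> l \<le> 1 / K \<Longrightarrow>
                (\<integral>\<^sup>+\<omega>. ennreal (exp (l * Z i \<omega>)) \<partial>M) \<le> ennreal (exp (l\<^sup>2 * s))"
  shows "measure M {\<omega>\<in>space M. (\<Sum>i<c. Z i \<omega>) \<ge> real c * t}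
           \<le> exp (- (real c * t\<^sup>2) / (2 * D + 2 * t * K))"
proof -
  define l where "l = t / (D + t * K)"
  have DtK: "D + t * K > 0" using D t K by (simp add: add_pos_pos)
  hence l: "l > 0" using t by (simp add: l_def)
  have "l \<le> 1 / K"
    unfolding l_def using DtK D K by (simp add: divide_le_eq field_simps)
  hence "measure M {\<omega>\<in>space M. (\<Sum>i<c. Z i \<omega>) \<ge> real c * t}
      \<le> exp (real c * l\<^sup>2 * s - l * (real c * t))"
    using prob_sum_ge_le_if_mgf_le[OF _ ind l, of s "real c * t"] mgf l by simp
  also have "\<dots> \<le> exp (- (real c * t\<^sup>2) / (2 * D + 2 * t * K))"
    using chernoff_exponent_le[of "real c" t K D s] t K D s unfolding l_def by simp
  finally show ?thesis .
qed

lemma prob_abs_mean_deviation_le: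
  fixes Xs :: "nat \<Rightarrow> 'a \<Rightarrow> real" and X :: "'b \<Rightarrow> real"
  assumes c: "c \<ge> 1" and t: "t > 0"
    and ind: "indep_vars (\<lambda>_. borel) Xs {..<c}"
    and distr: "\<forall>i<c. distr M borel (Xs i) = distr Q borel X"
    and [measurable]: "X \<in> borel_measurable Q"
    and K: "K > 0" and D: "D > 0" and s: "s \<le> D / 2"
    and mgf: "\<And>l. \<bar>l\<bar> \<le> 1 / K \<Longrightarrow> (\<integral>\<^sup>+\<omega>. ennreal (exp (l * (X \<omega> - \<mu>))) \<partial>Q) \<le> ennreal (exp (l\<^sup>2 * s))"
  shows "measure M {\<omega>\<in>space M. \<bar>(\<Sum>i<c. Xs i \<omega>) / real c - \<mu>\<bar> > t}
           \<le> 2 * exp (- (real c * t\<^sup>2) / (2 * D + 2 * t * K))"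
proof -
  have [measurable]: "\<And>i. i \<in> {..<c} \<Longrightarrow> Xs i \<in> borel_measurable M"
    using ind unfolding indep_vars_def by auto
  have mgfXs: "(\<integral>\<^sup>+\<omega>. ennreal (exp (l * (Xs i \<omega> - \<mu>))) \<partial>M) \<le> ennreal (exp (l\<^sup>2 * s))"
    if "i < c" "\<bar>l\<bar> \<le> 1 / K" for i l
  proof -
    have "(\<integral>\<^sup>+\<omega>. ennreal (exp (l * (Xs i \<omega> - \<mu>))) \<partial>M)
        = (\<integral>\<^sup>+x. ennreal (exp (l * (x - \<mu>))) \<partial>distr M borel (Xs i))"
      using that by (subst nn_integral_distr) auto
    also have "\<dots> = (\<integral>\<^sup>+\<omega>. ennreal (exp (l * (X \<omega> - \<mu>))) \<partial>Q)"
      using distr that by (subst nn_integral_distr[symmetric]) auto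
    finally show ?thesis using mgf[OF that(2)] by simp
  qed
  define U where "U = {\<omega>\<in>space M. (\<Sum>i<c. Xs i \<omega> - \<mu>) \<ge> real c * t}"
  define L where "L = {\<omega>\<in>space M. (\<Sum>i<c. \<mu> - Xs i \<omega>) \<ge> real c * t}"
  have "measure M U \<le> exp (- (real c * t\<^sup>2) / (2 * D + 2 * t * K))"
    unfolding U_def using mgfXs t K D s
    by (intro prob_sum_ge_le_bernstein indep_vars_compose2[OF ind, where Y="\<lambda>_ x. x - \<mu>", simplified])
       auto
  moreover have "measure M L \<le> exp (- (real c * t\<^sup>2) / (2 * D + 2 * t * K))"
    unfolding L_def using mgfXs[of _ "- _"] t K D s
    by (intro prob_sum_ge_le_bernstein indep_vars_compose2[OF ind, where Y="\<lambda>_ x. \<mu> - x", simplified])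
       (auto simp: algebra_simps)
  moreover have "{\<omega>\<in>space M. \<bar>(\<Sum>i<c. Xs i \<omega>) / real c - \<mu>\<bar> > t} \<subseteq> U \<union> L"
  proof safe
    fix \<omega> assume \<omega>: "\<omega> \<in> space M" and "\<bar>(\<Sum>i<c. Xs i \<omega>) / real c - \<mu>\<bar> > t" and "\<omega> \<notin> L"
    define d where "d = (\<Sum>i<c. Xs i \<omega>) / real c - \<mu>"
    have c0: "real c > 0" using c by simp
    have "(\<Sum>i<c. Xs i \<omega> - \<mu>) = real c * d" "(\<Sum>i<c. \<mu> - Xs i \<omega>) = real c * (- d)"
      using c0 by (simp_all add: d_def sum_subtractf field_simps)
    moreover have "t \<le> d \<or> t \<le> - d" using \<open>\<bar>_\<bar> > t\<close> unfolding d_def by linarith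
    hence "real c * t \<le> real c * d \<or> real c * t \<le> real c * (- d)"
      using c0 mult_left_mono[of t d "real c"] mult_left_mono[of t "- d" "real c"] by auto
    ultimately show "\<omega> \<in> U"
      using \<omega> \<open>\<omega> \<notin> L\<close> by (auto simp: U_def L_def)
  qed
  hence "measure M {\<omega>\<in>space M. \<bar>(\<Sum>i<c. Xs i \<omega>) / real c - \<mu>\<bar> > t} \<le> measure M U + measure M L"
    by (intro order.trans[OF finite_measure_mono measure_Un_le]) (auto simp: U_def L_def)
  ultimately show ?thesis by simp
qed

section \<open>Bounds on a cell of the partition\<close>

lemma partition_cell_bounds:
  fixes X Y :: "'a \<Rightarrow> real" and S :: "nat \<Rightarrow> real set"
  assumes [measurable]: "X \<in> borel_measurable M" "Y \<in> borel_measurable M"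
    and K: "K > 0" and E: "(\<integral>\<^sup>+\<omega>. ennreal (exp ((X \<omega>)\<^sup>2 / K\<^sup>2)) \<partial>M) \<le> ennreal (exp 1)"
    and C1: "C1 > 0" and S: "interval_partition H S" "h \<in> {1..H}"
    and cell: "C1 / real H \<le> measure M {\<omega>\<in>space M. Y \<omega> \<in> S h}"
  shows "\<And>t. t \<ge> 0 \<Longrightarrow> measure (cond_on M Y (S h)) {\<omega>\<in>space M. X \<omega> > t}
                          \<le> 1 / C1 * real H * exp (1 - t\<^sup>2 / K\<^sup>2)"
    and "(\<integral>\<^sup>+\<omega>. ennreal (exp ((X \<omega>)\<^sup>2 / (2 * K\<^sup>2))) \<partial>cond_on M Y (S h))
           \<le> ennreal (16 * exp 3 / C1 * real H)"
    and "\<And>m. m \<ge> 1 \<Longrightarrow> (\<integral>\<^sup>+\<omega>. ennreal (\<bar>X \<omega>\<bar> ^ m) \<partial>cond_on M Y (S h))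
           \<le> ennreal (16 * exp 3 / C1 * real H * real m * K ^ m * Gamma (real m / 2) / 2)"
    and "\<forall>(P :: 'b measure) Xs (c::nat) t. prob_space P \<and> c \<ge> 1 \<and> t > 0 \<and>
           prob_space.indep_vars P (\<lambda>_. borel) Xs {..<c} \<and>
           (\<forall>i<c. distr P borel (Xs i) = distr (cond_on M Y (S h)) borel X) \<longrightarrow>
           measure P {\<omega>\<in>space P. \<bar>(\<Sum>i<c. Xs i \<omega>) / real c - (\<integral>\<omega>'. X \<omega>' \<partial>cond_on M Y (S h))\<bar> > t}
           \<le> 2 * exp (- (real c * t\<^sup>2) / (2 * (16 * exp 3 / C1) * real H * K\<^sup>2 + 2 * t * K))"
proof -
  define A where "A = {\<omega>\<in>space M. Y \<omega> \<in> S h}"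
  define p where "p = C1 / real H"
  have H: "real H > 0" using S(1) by (simp add: interval_partition_def)
  have "S h \<in> sets borel"
    using S by (intro real_interval_borel_measurable) (simp add: interval_partition_def)
  hence A: "A \<in> sets M" unfolding A_def by measurable
  have p: "0 < p" "p \<le> measure M A" using C1 H cell by (simp_all add: p_def A_def)
  have Q: "cond_on M Y (S h) = uniform_measure M A" by (simp add: cond_on_def A_def)
  have e_le: "exp 1 / p \<le> 16 * exp 3 / C1 * real H"
  proof -
    have "exp 1 \<le> 16 * exp (3::real)" using exp_le_cancel_iff[of 1 3] exp_gt_zero[of 3] by linarith
    thus ?thesis using C1 H by (simp add: p_def field_simps)
  qed
  show "measure (cond_on M Y (S h)) {\<omega>\<in>space M. X \<omega> > t} \<le> 1 / C1 * real H * exp (1 - t\<^sup>2 / K\<^sup>2)"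
    if "t \<ge> 0" for t
    using uniform_measure_tail_le[OF A p _ K E that] by (simp add: Q p_def mult.commute)
  show "(\<integral>\<^sup>+\<omega>. ennreal (exp ((X \<omega>)\<^sup>2 / (2 * K\<^sup>2))) \<partial>cond_on M Y (S h))
           \<le> ennreal (16 * exp 3 / C1 * real H)"
    unfolding Q using uniform_measure_exp_square_le[OF A p _ K E] e_le
    by (auto intro: order.trans ennreal_leI)
  show "(\<integral>\<^sup>+\<omega>. ennreal (\<bar>X \<omega>\<bar> ^ m) \<partial>cond_on M Y (S h))
           \<le> ennreal (16 * exp 3 / C1 * real H * real m * K ^ m * Gamma (real m / 2) / 2)"
    if m: "m \<ge> 1" for m
  proof -
    have "0 \<le> K ^ m * (real m * Gamma (real m / 2) / 2)" using K m by simp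
    from mult_right_mono[OF e_le this]
    have "exp 1 / p * K ^ m * (real m * Gamma (real m / 2) / 2)
        \<le> 16 * exp 3 / C1 * real H * real m * K ^ m * Gamma (real m / 2) / 2"
      by (simp add: algebra_simps)
    thus ?thesis
      unfolding Q using uniform_measure_abs_power_le[OF A p _ K E m]
      by (auto intro: order.trans ennreal_leI)
  qed
  show "\<forall>(P :: 'b measure) Xs (c::nat) t. prob_space P \<and> c \<ge> 1 \<and> t > 0 \<and>
           prob_space.indep_vars P (\<lambda>_. borel) Xs {..<c} \<and>
           (\<forall>i<c. distr P borel (Xs i) = distr (cond_on M Y (S h)) borel X) \<longrightarrow>
           measure P {\<omega>\<in>space P. \<bar>(\<Sum>i<c. Xs i \<omega>) / real c - (\<integral>\<omega>'. X \<omega>' \<partial>cond_on M Y (S h))\<bar> > t}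
           \<le> 2 * exp (- (real c * t\<^sup>2) / (2 * (16 * exp 3 / C1) * real H * K\<^sup>2 + 2 * t * K))"
  proof (intro allI impI, elim conjE)
    fix P :: "'b measure" and Xs and c :: nat and t :: real
    assume P: "prob_space P" and iid: "c \<ge> 1" "t > 0" "prob_space.indep_vars P (\<lambda>_. borel) Xs {..<c}"
      "\<forall>i<c. distr P borel (Xs i) = distr (cond_on M Y (S h)) borel X"
    define D where "D = 16 * exp 3 / C1 * real H * K\<^sup>2"
    have XQ: "X \<in> borel_measurable (cond_on M Y (S h))"
      unfolding Q by (simp add: measurable_cong_sets[OF sets_uniform_measure refl])
    have D: "D > 0" and s: "8 * exp 3 * K\<^sup>2 / p \<le> D / 2"
      using C1 H K by (simp_all add: D_def p_def field_simps)
    have mgf: "(\<integral>\<^sup>+\<omega>. ennreal (exp (l * (X \<omega> - (\<integral>\<omega>'. X \<omega>' \<partial>cond_on M Y (S h))))) \<partial>cond_on M Y (S h))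
                 \<le> ennreal (exp (l\<^sup>2 * (8 * exp 3 * K\<^sup>2 / p)))" if "\<bar>l\<bar> \<le> 1 / K" for l
      unfolding Q using uniform_measure_centered_exp_le[OF A p _ K E that] by simp
    have "measure P {\<omega>\<in>space P. \<bar>(\<Sum>i<c. Xs i \<omega>) / real c - (\<integral>\<omega>'. X \<omega>' \<partial>cond_on M Y (S h))\<bar> > t}
        \<le> 2 * exp (- (real c * t\<^sup>2) / (2 * D + 2 * t * K))"
      by (rule prob_space.prob_abs_mean_deviation_le[OF P iid XQ K D s mgf])
    thus "measure P {\<omega>\<in>space P. \<bar>(\<Sum>i<c. Xs i \<omega>) / real c - (\<integral>\<omega>'. X \<omega>' \<partial>cond_on M Y (S h))\<bar> > t}
        \<le> 2 * exp (- (real c * t\<^sup>2) / (2 * (16 * exp 3 / C1) * real H * K\<^sup>2 + 2 * t * K))"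
      by (simp add: D_def mult.assoc)
  qed
qed

end

theorem lemma17:
  fixes M :: "'a measure" and X Y :: "'a \<Rightarrow> real" and K t0 :: real
    and N :: "real measure" and f :: "real \<times> real \<Rightarrow> ennreal"
  assumes M: "prob_space M"
    and N: "sigma_finite_measure N" "sets N = sets borel"
    and joint: "distributed M (lborel \<Otimes>\<^sub>M N) (\<lambda>\<omega>. (X \<omega>, Y \<omega>)) f"
    and sg: "subgaussian M X"
    and mean0: "integrable M X" "(\<integral>\<omega>. X \<omega> \<partial>M) = 0"
    and ub: "upexp_bounded M X K"
    and t0: "t0 > 0" "\<forall>t. 0 \<le> t \<and> t \<le> t0 \<longrightarrow>
                 (\<integral>\<^sup>+\<omega>. ennreal (exp (t * (X \<omega>)\<^sup>2)) \<partial>M) \<le> ennreal (exp 1)"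
  shows
    \<comment> \<open>(i)\<close>
    "(let m = real_cond_exp M (vimage_algebra (space M) Y borel) X;
          \<epsilon> = (\<lambda>\<omega>. X \<omega> - m \<omega>)
      in subgaussian M m \<and> upexp_bounded M m K \<and>
         subgaussian M \<epsilon> \<and> upexp_bounded M \<epsilon> (2 * K))
   \<and>
    \<comment> \<open>(ii)\<close>
    (let Z = {y. \<exists>t\<in>{0<..t0}. (\<integral>\<^sup>+x. ennreal (exp (t * x\<^sup>2)) * f (x, y) \<partial>lborel) = \<infinity>}
      in AE \<omega> in M. Y \<omega> \<notin> Z)
   \<and>
    \<comment> \<open>(iii) and (iv)\<close>
    (\<forall>C1 C2. 0 < C1 \<and> C1 < 1 \<and> 1 < C2 \<longrightarrow>
      (\<exists>C. \<forall>H S. interval_partition H S \<and>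
              (\<forall>h\<in>{1..H}. C1 / real H \<le> measure M {\<omega>\<in>space M. Y \<omega> \<in> S h} \<and>
                           measure M {\<omega>\<in>space M. Y \<omega> \<in> S h} \<le> C2 / real H) \<longrightarrow>
            (\<forall>h\<in>{1..H}. \<forall>t\<ge>0.
               measure (cond_on M Y (S h)) {\<omega>\<in>space M. X \<omega> > t}
                 \<le> C * real H * exp (1 - t\<^sup>2 / K\<^sup>2)))
      \<and>
      (\<exists>C>0. \<forall>H S. interval_partition H S \<and>
              (\<forall>h\<in>{1..H}. C1 / real H \<le> measure M {\<omega>\<in>space M. Y \<omega> \<in> S h} \<and>
                           measure M {\<omega>\<in>space M. Y \<omega> \<in> S h} \<le> C2 / real H) \<longrightarrow>
            (\<forall>h\<in>{1..H}.
               (\<integral>\<^sup>+\<omega>. ennreal (exp ((X \<omega>)\<^sup>2 / (2 * K\<^sup>2))) \<partial>cond_on M Y (S h))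
                  \<le> ennreal (C * real H)
             \<and> (\<forall>m::nat. m \<ge> 1 \<longrightarrow>
                  (\<integral>\<^sup>+\<omega>. ennreal (\<bar>X \<omega>\<bar> ^ m) \<partial>cond_on M Y (S h))
                  \<le> ennreal (C * real H * real m * K ^ m * Gamma (real m / 2) / 2))
             \<and> (\<forall>(P :: 'b measure) (Xs :: nat \<Rightarrow> 'b \<Rightarrow> real) (c::nat) (t::real).
                  prob_space P \<and> c \<ge> 1 \<and> t > 0 \<and>
                  prob_space.indep_vars P (\<lambda>_. borel) Xs {..<c} \<and>
                  (\<forall>i<c. distr P borel (Xs i) = distr (cond_on M Y (S h)) borel X) \<longrightarrow>
                  measure P {\<omega>\<in>space P.
                     \<bar>(\<Sum>i<c. Xs i \<omega>) / real c - (\<integral>\<omega>'. X \<omega>' \<partial>cond_on M Y (S h))\<bar> > t}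
                  \<le> 2 * exp (- (real c * t\<^sup>2) / (2 * C * real H * K\<^sup>2 + 2 * t * K))))))"
proof -
  interpret prob_space M by fact
  have pair: "(\<lambda>\<omega>. (X \<omega>, Y \<omega>)) \<in> measurable M (lborel \<Otimes>\<^sub>M N)"
    using distributed_measurable[OF joint] .
  have Xm: "X \<in> borel_measurable M"
    using measurable_compose[OF pair measurable_fst] by simp
  have "Y \<in> measurable M N"
    using measurable_compose[OF pair measurable_snd] by simp
  hence Ym: "Y \<in> borel_measurable M"
    using measurable_cong_sets[OF refl N(2)] by blast
  have K: "K > 0" and E: "(\<integral>\<^sup>+\<omega>. ennreal (exp ((X \<omega>)\<^sup>2 / K\<^sup>2)) \<partial>M) \<le> ennreal (exp 1)"
    using upexp_bounded_exp_square_moment[OF ub] by auto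
  have "(\<integral>\<^sup>+\<omega>. ennreal (exp (t0 * (X \<omega>)\<^sup>2)) \<partial>M) \<noteq> \<infinity>"
    using t0(2)[rule_format, of t0] t0(1) by (auto simp: top_unique)
  note residual = real_cond_exp_and_residual_upexp_bounded[OF Ym mean0 ub]
    and sections = AE_exp_square_section_finite[OF N(1) joint this]
    and cells = partition_cell_bounds[OF Xm Ym K E]
  show ?thesis
    unfolding Let_def
  proof (intro conjI[OF residual conjI[OF sections]] allI impI, goal_cases)
    case (1 C1 C2)
    then have "C1 > 0" by simp
    then show ?case
      by (intro conjI[OF exI[of _ "1 / C1"] exI[of _ "16 * exp 3 / C1"]] allI impI ballI conjI)
         (blast intro: cells(1-3) cells(4)[rule_format] | simp)+
  qed
qed

end
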